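(* For every $r\in\mathbb{N}$ there exist moulds ${}_r\mathrm{Poin}^\bullet$ on $\mathcal{A}(F)$ and ${}_r\mathrm{poin}^\bullet$ on $A(F)$ such that $$F^r_{\rm Poin}=F_{\rm lin}\Big(\sum_{\mathbf{m}}{}_r\mathrm{Poin}^{\mathbf{m}}D_{\mathbf{m}}\Big)=F_{\rm lin}\Big(\sum_{\mathbf{n}}{}_r\mathrm{poin}^{\mathbf{n}}B_{\mathbf{n}}\Big).$$
   Context: Fix $\nu\ge1$, $\lambda\in\mathbb{C}^\nu$, $\lambda\cdot m=\sum_i\lambda_im_i$, $|m|=m_1+\dots+m_\nu$. Let $f(x)=(e^{\lambda_1}x_1,\dots,e^{\lambda_\nu}x_\nu)+h(x)$ be a local analytic diffeomorphism of $(\mathbb{C}^\nu,0)$, $F(\varphi)=\varphi\circ f$ on $\mathbb{C}[[x]]$, $F_{\rm lin}(x^m)=e^{\lambda\cdot m}x^m$. An operator is homogeneous of degree $n\in\mathbb{Z}^\nu$ if it maps each $x^k$ to a multiple of $x^{k+n}$. Write $F=F_{\rm lin}(\mathrm{Id}+\sum_{n\in A(F)}B_n)=F_{\rm lin}\exp(\sum_{m\in\mathcal{A}(F)}D_m)$ with $B_n$ homogeneous of degree $n$ and $D_m$ homogeneous derivations of degree $m$; $A(F),\mathcal{A}(F)\subset\mathbb{Z}^\nu$ are taken closed under addition (degrees with zero operator allowed). Words: $B_{\mathbf{n}}=B_{n_1}\circ\cdots\circ B_{n_r}$, $D_{\mathbf{m}}$ likewise, identity on the empty word; moulds are complex-valued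 functions on words; sums are formal. Poincaré normal form up to order $r$: $F^0_{\rm Poin}=F$; given $F^{i-1}_{\rm Poin}=F_{\rm lin}\exp(\sum_m{}_iD_m)$ with ${}_iD_m$ its homogeneous derivation components of degree $m$, let $N^{(i)}_k=\{m:{}_iD_m\neq0,\ |m|=k,\ e^{\lambda\cdot m}\neq1\}$, $K_i=\min\{k\ge1:N^{(i)}_k\neq\emptyset\}$, $\mathbf{S}_i=\sum_{m\in N^{(i)}_{K_i}}{}_iD_m/(1-e^{\lambda\cdot m})$, and $F^i_{\rm Poin}=\exp(\mathbf{S}_i)\circ F^{i-1}_{\rm Poin}\circ\exp(-\mathbf{S}_i)$. *)

theory Defs
  imports "HOL-Analysis.Analysis"
begin

(* The index type 'i (finite) plays the role of {1..nu}; nu = CARD('i).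
   Degrees (elements of Z^nu)                : 'i => int.
   Formal power series in C[[x]]              : coefficient functions.
   Operators on C[[x]] are represented by their matrices on monomials:
   T k k' = coefficient of x^k' in T(x^k).                                  *)

type_synonym 'i mon = "'i \<Rightarrow> nat"
type_synonym 'i deg = "'i \<Rightarrow> int"
type_synonym 'i ser = "'i mon \<Rightarrow> complex"
type_synonym 'i op  = "'i mon \<Rightarrow> 'i mon \<Rightarrow> complex"

definition mdeg :: "'i::finite mon \<Rightarrow> nat" where
  "mdeg k = (\<Sum>j\<in>UNIV. k j)"

definition zdeg :: "'i::finite deg \<Rightarrow> int" where
  "zdeg m = (\<Sum>j\<in>UNIV. m j)"

definition ldot :: "('i::finite \<Rightarrow> complex) \<Rightarrow> 'i deg \<Rightarrow> complex" where
  "ldot lam m = (\<Sum>j\<in>UNIV. lam j * of_int (m j))"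

definition zmon :: "'i mon \<Rightarrow> 'i deg" where
  "zmon k = (\<lambda>j. int (k j))"

definition is_step :: "'i mon \<Rightarrow> 'i deg \<Rightarrow> 'i mon \<Rightarrow> bool" where
  "is_step k n k' \<longleftrightarrow> (\<forall>j. int (k' j) = int (k j) + n j)"

definition unitmon :: "'i \<Rightarrow> 'i mon" where
  "unitmon j = (\<lambda>i. if i = j then 1 else 0)"

definition fser :: "('i \<Rightarrow> complex) \<Rightarrow> ('i \<Rightarrow> 'i ser) \<Rightarrow> 'i \<Rightarrow> 'i ser" where
  "fser lam h j = (\<lambda>p. (if p = unitmon j then exp (lam j) else 0) + h j p)"

(* F(phi) = phi o f : its matrix.  F(x^k) = prod_j f_j^(k_j); the coefficient of
   x^k' is the sum over all ways of choosing one monomial c(j,t) from each of the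
   k_j copies of f_j (t < k_j) such that the chosen exponents add up to k'. *)
definition comp_op :: "('i::finite \<Rightarrow> 'i ser) \<Rightarrow> 'i op" where
  "comp_op f k k' =
     (\<Sum>c \<in> {c. c \<in> (SIGMA j:UNIV. {..<k j}) \<rightarrow>\<^sub>E {p. p \<le> k'} \<and>
                (\<forall>i. (\<Sum>q\<in>(SIGMA j:UNIV. {..<k j}). c q i) = k' i)}.
        \<Prod>q\<in>(SIGMA j:UNIV. {..<k j}). f (fst q) (c q))"

definition Fop :: "('i::finite \<Rightarrow> complex) \<Rightarrow> ('i \<Rightarrow> 'i ser) \<Rightarrow> 'i op" where
  "Fop lam h = comp_op (fser lam h)"

definition op_id :: "'i op" where
  "op_id k k' = (if k = k' then 1 else 0)"

definition op_zero :: "'i op" where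
  "op_zero = (\<lambda>_ _. 0)"

(* op_comp A B = A o B  (B applied first); formal (entrywise) sum *)
definition op_comp :: "'i op \<Rightarrow> 'i op \<Rightarrow> 'i op" where
  "op_comp A B k k' = (\<Sum>\<^sub>\<infinity>k''. B k k'' * A k'' k')"

definition op_pow :: "'i op \<Rightarrow> nat \<Rightarrow> 'i op" where
  "op_pow A r = (op_comp A ^^ r) op_id"

definition op_exp :: "'i op \<Rightarrow> 'i op" where
  "op_exp S k k' = (\<Sum>\<^sub>\<infinity>r::nat. op_pow S r k k' / fact r)"

definition op_log1p :: "'i op \<Rightarrow> 'i op" where
  "op_log1p N k k' = (\<Sum>\<^sub>\<infinity>r\<in>{1::nat..}. (-1)^(r+1) / of_nat r * op_pow N r k k')"

definition Flin :: "('i::finite \<Rightarrow> complex) \<Rightarrow> 'i op" where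
  "Flin lam k k' = (if k = k' then exp (ldot lam (zmon k)) else 0)"

definition Flin_inv :: "('i::finite \<Rightarrow> complex) \<Rightarrow> 'i op" where
  "Flin_inv lam k k' = (if k = k' then exp (- ldot lam (zmon k)) else 0)"

definition hom_comp :: "'i op \<Rightarrow> 'i deg \<Rightarrow> 'i op" where
  "hom_comp T n k k' = (if is_step k n k' then T k k' else 0)"

definition nilpart :: "('i::finite \<Rightarrow> complex) \<Rightarrow> 'i op \<Rightarrow> 'i op" where
  "nilpart lam T k k' = op_comp (Flin_inv lam) T k k' - op_id k k'"

(* T = F_lin (Id + sum_n B_n) *)
definition Bcomp :: "('i::finite \<Rightarrow> complex) \<Rightarrow> 'i op \<Rightarrow> 'i deg \<Rightarrow> 'i op" where
  "Bcomp lam T n = hom_comp (nilpart lam T) n"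

(* T = F_lin exp (sum_m D_m) *)
definition Dcomp :: "('i::finite \<Rightarrow> complex) \<Rightarrow> 'i op \<Rightarrow> 'i deg \<Rightarrow> 'i op" where
  "Dcomp lam T m = hom_comp (op_log1p (nilpart lam T)) m"

definition Nset :: "('i::finite \<Rightarrow> complex) \<Rightarrow> 'i op \<Rightarrow> nat \<Rightarrow> 'i deg set" where
  "Nset lam T k = {m. Dcomp lam T m \<noteq> op_zero \<and> zdeg m = int k \<and> exp (ldot lam m) \<noteq> 1}"

(* S_i (taken to be 0 if no non-resonant component is left) *)
definition Sgen :: "('i::finite \<Rightarrow> complex) \<Rightarrow> 'i op \<Rightarrow> 'i op" where
  "Sgen lam T =
     (if \<exists>k\<ge>1. Nset lam T k \<noteq> {} then
        (let K = (LEAST k. 1 \<le> k \<and> Nset lam T k \<noteq> {}) in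
          (\<lambda>k k'. \<Sum>\<^sub>\<infinity>m\<in>Nset lam T K. Dcomp lam T m k k' / (1 - exp (ldot lam m))))
      else op_zero)"

primrec poin_iter :: "('i::finite \<Rightarrow> complex) \<Rightarrow> 'i op \<Rightarrow> nat \<Rightarrow> 'i op" where
  "poin_iter lam T 0 = T"
| "poin_iter lam T (Suc i) =
     op_comp (op_exp (Sgen lam (poin_iter lam T i)))
       (op_comp (poin_iter lam T i) (op_exp (\<lambda>k k'. - Sgen lam (poin_iter lam T i) k k')))"

inductive_set add_closure :: "'i deg set \<Rightarrow> 'i deg set" for S where
  base: "m \<in> S \<Longrightarrow> m \<in> add_closure S"
| add: "m \<in> add_closure S \<Longrightarrow> n \<in> add_closure S \<Longrightarrow> (\<lambda>j. m j + n j) \<in> add_closure S"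

definition Aset :: "('i::finite \<Rightarrow> complex) \<Rightarrow> 'i op \<Rightarrow> 'i deg set" where
  "Aset lam T = add_closure {n. Bcomp lam T n \<noteq> op_zero}"

definition calAset :: "('i::finite \<Rightarrow> complex) \<Rightarrow> 'i op \<Rightarrow> 'i deg set" where
  "calAset lam T = add_closure {m. Dcomp lam T m \<noteq> op_zero}"

definition word_op :: "('i deg \<Rightarrow> 'i op) \<Rightarrow> 'i deg list \<Rightarrow> 'i op" where
  "word_op C w = foldr (\<lambda>n acc. op_comp (C n) acc) w op_id"

definition mould_expands ::
  "('i::finite \<Rightarrow> complex) \<Rightarrow> 'i op \<Rightarrow> ('i deg \<Rightarrow> 'i op) \<Rightarrow> 'i deg set \<Rightarrow> ('i deg list \<Rightarrow> complex) \<Rightarrow> bool" where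
  "mould_expands lam T C A M \<longleftrightarrow>
     (\<forall>k k'. ((\<lambda>w. exp (ldot lam (zmon k')) * (M w * word_op C w k k')) has_sum T k k') (lists A))"

end

theory Submission
  imports Defs "HOL-Computational_Algebra.Formal_Power_Series" "HOL-Library.Function_Algebras"
begin

(* Since f is tangent to its linear part, F = F_lin (Id + N) with N strictly raising the total
   degree. An entry of a product of homogeneous components of N therefore involves only words of
   bounded length, so all formal sums below are finite sums.
   Let C be the family of homogeneous components of N, or of L = log (Id + N). The operators
   F_lin (sum_w M(w) C_w) with M([]) = 1 are stable under a Poincare step: subtracting Id, log,
   taking homogeneous components, dividing by 1 - exp (lambda.m) and exp all act on the moulds,
   through the concatenation product and power series, and C_w F_lin = exp (- lambda.|w|) F_lin C_w
   where |w| = n_1 + ... + n_r. The identity exp (log (Id + N)) = Id + N is transported from C[[t]]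
   along the moulds that depend only on the length of the word. *)

unbundle no vec_syntax
notation fps_nth (infixl \<open>$\<close> 75)

section \<open>Operators that do not lower the degree\<close>

lemma mdeg_component_le: "k j \<le> mdeg (k :: 'i::finite mon)"
  unfolding mdeg_def by (rule member_le_sum) auto

definition mons_upto :: "nat \<Rightarrow> 'i::finite mon set" where
  "mons_upto d = {k. mdeg k \<le> d}"

lemma finite_mons_upto: "finite (mons_upto d :: 'i::finite mon set)"
proof (rule finite_subset)
  show "mons_upto d \<subseteq> PiE (UNIV :: 'i set) (\<lambda>_. {..d})"
    unfolding mons_upto_def PiE_UNIV_domain using mdeg_component_le order_trans by fastforce
qed (intro finite_PiE; simp)

lemma infsum_finite_support:
  fixes f :: "'a \<Rightarrow> complex"
  assumes "finite B" "B \<subseteq> A" "\<And>x. x \<in> A - B \<Longrightarrow> f x = 0"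
  shows "infsum f A = sum f B"
  using has_sum_finite_neutralI[OF assms refl] by (rule infsumI)

definition op_upper :: "'i::finite op \<Rightarrow> bool" where
  "op_upper X \<longleftrightarrow> (\<forall>k k'. X k k' \<noteq> 0 \<longrightarrow> mdeg k \<le> mdeg k')"

definition op_strict_upper :: "'i::finite op \<Rightarrow> bool" where
  "op_strict_upper X \<longleftrightarrow> (\<forall>k k'. X k k' \<noteq> 0 \<longrightarrow> mdeg k < mdeg k')"

lemma op_comp_eq_sum:
  assumes "op_upper A"
  shows "op_comp A B k k' = (\<Sum>k''\<in>mons_upto (mdeg k'). B k k'' * A k'' k')"
  unfolding op_comp_def
  by (rule infsum_finite_support) (use finite_mons_upto assms in \<open>auto simp: op_upper_def mons_upto_def\<close>)

lemma op_comp_nonzeroD: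
  assumes "op_comp A B k k' \<noteq> 0"
  obtains k'' where "B k k'' \<noteq> 0" "A k'' k' \<noteq> 0"
  using assms unfolding op_comp_def by (metis (mono_tags, lifting) infsum_0 mult_eq_0_iff)

lemma op_upper_comp: "op_upper A \<Longrightarrow> op_upper B \<Longrightarrow> op_upper (op_comp A B)"
  unfolding op_upper_def by (metis op_comp_nonzeroD order_trans)

lemma op_comp_diag:
  assumes "\<And>k k'. D k k' = (if k = k' then d k else 0)"
  shows op_comp_diag_left: "op_comp D Y k k' = Y k k' * d k'"
    and op_comp_diag_right: "op_comp Y D k k' = d k * Y k k'"
proof -
  have "op_comp D Y k k' = (\<Sum>k''\<in>{k'}. Y k k'' * D k'' k')"
    unfolding op_comp_def by (rule infsum_finite_support) (auto simp: assms)
  then show "op_comp D Y k k' = Y k k' * d k'" by (simp add: assms)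
  have "op_comp Y D k k' = (\<Sum>k''\<in>{k}. D k k'' * Y k'' k')"
    unfolding op_comp_def by (rule infsum_finite_support) (auto simp: assms)
  then show "op_comp Y D k k' = d k * Y k k'" by (simp add: assms)
qed

lemma op_upper_diag: "(\<And>k k'. D k k' = (if k = k' then d k else 0)) \<Longrightarrow> op_upper D"
  unfolding op_upper_def by simp

lemma op_upper_id: "op_upper op_id"
  by (rule op_upper_diag) (simp add: op_id_def)

lemma op_comp_id_left: "op_comp op_id Y = Y"
  by (intro ext) (simp add: op_comp_diag_left[of _ "\<lambda>_. 1"] op_id_def)

lemma op_comp_id_right: "op_comp Y op_id = Y"
  by (intro ext) (simp add: op_comp_diag_right[of _ "\<lambda>_. 1"] op_id_def)

lemma op_comp_assoc:
  fixes A B Y :: "'i::finite op"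
  assumes "op_upper A" "op_upper B"
  shows "op_comp (op_comp A B) Y = op_comp A (op_comp B Y)"
proof (intro ext)
  fix k k' :: "'i mon"
  let ?U = "mons_upto (mdeg k')"
  have "op_comp (op_comp A B) Y k k' = (\<Sum>a\<in>?U. \<Sum>b\<in>?U. Y k a * B a b * A b k')"
    by (simp add: op_comp_eq_sum op_upper_comp assms sum_distrib_left mult.assoc)
  also have "\<dots> = (\<Sum>b\<in>?U. \<Sum>a\<in>mons_upto (mdeg b). Y k a * B a b * A b k')"
  proof (subst sum.swap, rule sum.cong[OF refl])
    fix b :: "'i mon" assume "b \<in> ?U"
    then show "(\<Sum>a\<in>?U. Y k a * B a b * A b k') = (\<Sum>a\<in>mons_upto (mdeg b). Y k a * B a b * A b k')"
      by (intro sum.mono_neutral_right)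
         (use finite_mons_upto assms(2) in \<open>auto simp: mons_upto_def op_upper_def\<close>)
  qed
  also have "\<dots> = op_comp A (op_comp B Y) k k'"
    by (simp add: op_comp_eq_sum assms sum_distrib_right)
  finally show "op_comp (op_comp A B) Y k k' = op_comp A (op_comp B Y) k k'" .
qed

lemma op_pow_0 [simp]: "op_pow A 0 = op_id"
  by (simp add: op_pow_def)

lemma op_pow_Suc [simp]: "op_pow A (Suc r) = op_comp A (op_pow A r)"
  by (simp add: op_pow_def)

lemma Flin_comp_apply: "op_comp (Flin lam) Y k k' = Y k k' * exp (ldot lam (zmon k'))"
  by (rule op_comp_diag_left) (simp add: Flin_def)

lemma comp_Flin_apply: "op_comp Y (Flin lam) k k' = exp (ldot lam (zmon k)) * Y k k'"
  by (rule op_comp_diag_right) (simp add: Flin_def)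

lemma Flin_inv_comp_apply: "op_comp (Flin_inv lam) Y k k' = Y k k' * exp (- ldot lam (zmon k'))"
  by (rule op_comp_diag_left) (simp add: Flin_inv_def)

lemma op_upper_Flin: "op_upper (Flin lam)"
  by (rule op_upper_diag) (simp add: Flin_def)

lemma op_upper_Flin_inv: "op_upper (Flin_inv lam)"
  by (rule op_upper_diag) (simp add: Flin_inv_def)

lemma Flin_inv_comp_Flin: "op_comp (Flin_inv lam) (Flin lam) = op_id"
  by (intro ext) (simp add: Flin_inv_comp_apply Flin_def op_id_def flip: exp_add)

lemma Flin_comp_Flin_inv: "op_comp (Flin lam) (Flin_inv lam) = op_id"
  by (intro ext) (simp add: Flin_comp_apply Flin_inv_def op_id_def flip: exp_add)

lemma Flin_comp_nilpart: "op_comp (Flin lam) (\<lambda>k k'. op_id k k' + nilpart lam T k k') = T"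
proof -
  have "(\<lambda>k k'. op_id k k' + nilpart lam T k k') = op_comp (Flin_inv lam) T"
    by (simp add: nilpart_def)
  then show ?thesis
    by (simp flip: op_comp_assoc[OF op_upper_Flin op_upper_Flin_inv]
        add: Flin_comp_Flin_inv op_comp_id_left)
qed

lemma nilpart_Flin_comp: "nilpart lam (op_comp (Flin lam) Y) = (\<lambda>k k'. Y k k' - op_id k k')"
  unfolding nilpart_def
  by (simp flip: op_comp_assoc[OF op_upper_Flin_inv op_upper_Flin]
      add: Flin_inv_comp_Flin op_comp_id_left)

section \<open>The diffeomorphism is tangent to its linear part\<close>

lemma mdeg_unitmon [simp]: "mdeg (unitmon j :: 'i::finite mon) = 1"
  by (simp add: mdeg_def unitmon_def)

(* comp_op f k k' picks a monomial c (j, t) of f\<^sub>j for every slot (j, t), t < k\<^sub>j; the linear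
   choice picks x\<^sub>j everywhere. *)

definition slots :: "'i::finite mon \<Rightarrow> ('i \<times> nat) set" where
  "slots k = (SIGMA j:UNIV. {..<k j})"

definition linear_choice :: "'i::finite mon \<Rightarrow> 'i \<times> nat \<Rightarrow> 'i mon" where
  "linear_choice k = restrict (\<lambda>q. unitmon (fst q)) (slots k)"

lemma finite_slots [simp]: "finite (slots k)"
  by (simp add: slots_def)

lemma card_slots: "card (slots k) = mdeg k"
  by (simp add: slots_def mdeg_def)

lemma sum_linear_choice: "(\<Sum>q\<in>slots k. linear_choice k q i) = k i"
proof -
  have "(\<Sum>q\<in>slots k. linear_choice k q i) = (\<Sum>(j, t)\<in>slots k. unitmon j i)"
    by (intro sum.cong) (auto simp: linear_choice_def)
  also have "\<dots> = (\<Sum>j\<in>UNIV. \<Sum>t<k j. unitmon j i)"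
    unfolding slots_def by (rule sum.Sigma[symmetric]) auto
  also have "\<dots> = (\<Sum>j\<in>UNIV. if j = i then k j else 0)"
    by (intro sum.cong) (auto simp: unitmon_def)
  finally show ?thesis by simp
qed

lemma choice_eq_linear_choice:
  assumes linear: "\<And>j p. f j p \<noteq> 0 \<Longrightarrow> mdeg p \<le> 1 \<Longrightarrow> p = unitmon j"
    and deg: "mdeg k' \<le> mdeg k"
    and c: "c \<in> slots k \<rightarrow>\<^sub>E {p. p \<le> k'}" "\<And>i. (\<Sum>q\<in>slots k. c q i) = k' i"
    and nz: "\<And>q. q \<in> slots k \<Longrightarrow> f (fst q) (c q) \<noteq> 0"
  shows "c = linear_choice k"
proof -
  \<comment> \<open>Each chosen monomial has degree at least 1, and the degrees add up to |k'| \<le> |k| = #slots.\<close>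
  have pos: "1 \<le> mdeg (c q)" if "q \<in> slots k" for q
    using linear[of "fst q" "c q"] nz[OF that] by (cases "mdeg (c q)") auto
  have "(\<Sum>q\<in>slots k. mdeg (c q)) = (\<Sum>i\<in>UNIV. \<Sum>q\<in>slots k. c q i)"
    unfolding mdeg_def by (rule sum.swap)
  also have "\<dots> = mdeg k'"
    by (simp add: c(2) mdeg_def)
  finally have "(\<Sum>q\<in>slots k. mdeg (c q)) \<le> (\<Sum>q\<in>slots k. 1)"
    using deg by (simp add: card_slots)
  then have deg1: "\<forall>q\<in>slots k. mdeg (c q) = 1"
    using sum_strict_mono_ex1[OF finite_slots, of k "\<lambda>_. 1" "\<lambda>q. mdeg (c q)"] pos by force
  have "c q = linear_choice k q" if "q \<in> slots k" for q
  proof -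
    have "c q = unitmon (fst q)"
      using linear nz deg1 that by (metis order_refl)
    with that show ?thesis by (simp add: linear_choice_def)
  qed
  moreover have "c q = undefined" if "q \<notin> slots k" for q
    using PiE_arb[OF c(1) that] .
  ultimately show ?thesis
    by (auto simp: linear_choice_def fun_eq_iff)
qed

lemma comp_op_low_degree:
  fixes f :: "'i::finite \<Rightarrow> 'i ser"
  assumes linear: "\<And>j p. f j p \<noteq> 0 \<Longrightarrow> mdeg p \<le> 1 \<Longrightarrow> p = unitmon j"
    and deg: "mdeg k' \<le> mdeg k"
  shows "comp_op f k k' = (if k = k' then (\<Prod>j\<in>UNIV. f j (unitmon j) ^ k j) else 0)"
proof -
  define CS where "CS = {c. c \<in> slots k \<rightarrow>\<^sub>E {p. p \<le> k'} \<and> (\<forall>i. (\<Sum>q\<in>slots k. c q i) = k' i)}"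
  have "{p. p \<le> k'} \<subseteq> mons_upto (mdeg k')"
    by (auto simp: mons_upto_def mdeg_def le_fun_def intro: sum_mono)
  then have "finite (slots k \<rightarrow>\<^sub>E {p. p \<le> k'})"
    by (intro finite_PiE finite_slots) (rule finite_subset[OF _ finite_mons_upto])
  then have "finite CS"
    unfolding CS_def by (rule finite_subset[rotated]) auto
  moreover have "(\<Prod>q\<in>slots k. f (fst q) (c q)) = 0" if "c \<in> CS - CS \<inter> {linear_choice k}" for c
    using that choice_eq_linear_choice[where f = f and c = c, OF linear deg]
    by (intro prod_zero[OF finite_slots]) (auto simp: CS_def)
  ultimately have "comp_op f k k' = (\<Sum>c\<in>CS \<inter> {linear_choice k}. \<Prod>q\<in>slots k. f (fst q) (c q))"
    unfolding comp_op_def slots_def[symmetric] CS_def[symmetric]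
    by (intro sum.mono_neutral_right) auto
  moreover have "linear_choice k \<in> CS \<longleftrightarrow> k = k'"
  proof
    assume "k = k'"
    moreover have "linear_choice k \<in> slots k \<rightarrow>\<^sub>E {p. p \<le> k}"
      by (auto simp: linear_choice_def slots_def unitmon_def le_fun_def)
    ultimately show "linear_choice k \<in> CS"
      by (simp add: CS_def sum_linear_choice)
  qed (auto simp: CS_def sum_linear_choice fun_eq_iff)
  moreover have "(\<Prod>q\<in>slots k. f (fst q) (linear_choice k q)) = (\<Prod>j\<in>UNIV. f j (unitmon j) ^ k j)"
  proof -
    have "(\<Prod>q\<in>slots k. f (fst q) (linear_choice k q)) = (\<Prod>(j, t)\<in>slots k. f j (unitmon j))"
      by (intro prod.cong) (auto simp: linear_choice_def)
    also have "\<dots> = (\<Prod>j\<in>UNIV. \<Prod>t<k j. f j (unitmon j))"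
      unfolding slots_def by (rule prod.Sigma[symmetric]) auto
    finally show ?thesis by simp
  qed
  ultimately show ?thesis
    by auto
qed

lemma Fop_low_degree:
  assumes h_order2: "\<forall>j p. mdeg p \<le> 1 \<longrightarrow> h j p = 0" and "mdeg k' \<le> mdeg k"
  shows "Fop lam h k k' = Flin lam k k'"
proof -
  have linear: "p = unitmon j" if "fser lam h j p \<noteq> 0" "mdeg p \<le> 1" for j p
    using that h_order2 by (auto simp: fser_def split: if_splits)
  have "Fop lam h k k' = (if k = k' then \<Prod>j\<in>UNIV. fser lam h j (unitmon j) ^ k j else 0)"
    unfolding Fop_def by (rule comp_op_low_degree[OF linear assms(2)])
  also have "\<dots> = Flin lam k k'"
    using h_order2 by (simp add: Flin_def fser_def ldot_def zmon_def exp_sum mult.commute flip: exp_of_nat_mult)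
  finally show ?thesis .
qed

lemma op_strict_upper_nilpart_Fop:
  assumes "\<forall>j p. mdeg p \<le> 1 \<longrightarrow> h j p = 0"
  shows "op_strict_upper (nilpart lam (Fop lam h))"
  unfolding op_strict_upper_def
proof (intro allI impI)
  fix k k' assume nz: "nilpart lam (Fop lam h) k k' \<noteq> 0"
  show "mdeg k < mdeg k'"
  proof (rule ccontr)
    assume "\<not> mdeg k < mdeg k'"
    then have "Fop lam h k k' = Flin lam k k'"
      by (simp add: Fop_low_degree assms)
    then have "nilpart lam (Fop lam h) k k' = 0"
      by (simp add: nilpart_def Flin_inv_comp_apply Flin_def op_id_def flip: exp_add)
    with nz show False ..
  qed
qed

section \<open>Moulds acting on words of operators\<close>

type_synonym 'a mould = "'a list \<Rightarrow> complex"

lemma word_op_Nil [simp]: "word_op C [] = op_id"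
  by (simp add: word_op_def)

lemma word_op_Cons [simp]: "word_op C (n # w) = op_comp (C n) (word_op C w)"
  by (simp add: word_op_def)

lemma word_op_nonzero_letters:
  assumes "word_op C w k k' \<noteq> 0" "n \<in> set w"
  shows "C n \<noteq> op_zero"
  using assms
proof (induction w arbitrary: k')
  case (Cons a w)
  then obtain k'' where "word_op C w k k'' \<noteq> 0" "C a k'' k' \<noteq> 0"
    by (auto elim: op_comp_nonzeroD)
  with Cons show ?case by (auto simp: op_zero_def)
qed simp

lemma sum_word_splits:
  fixes g :: "'a list \<Rightarrow> 'a list \<Rightarrow> 'b::comm_monoid_add"
  assumes "finite W" "\<And>w i. w \<in> W \<Longrightarrow> take i w \<in> W \<and> drop i w \<in> W"
    and "\<And>u v. u \<in> W \<Longrightarrow> v \<in> W \<Longrightarrow> u @ v \<notin> W \<Longrightarrow> g u v = 0"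
  shows "(\<Sum>w\<in>W. \<Sum>i\<le>length w. g (take i w) (drop i w)) = (\<Sum>u\<in>W. \<Sum>v\<in>W. g u v)"
proof -
  have "(\<Sum>w\<in>W. \<Sum>i\<le>length w. g (take i w) (drop i w))
      = (\<Sum>(w, i)\<in>(SIGMA w:W. {..length w}). g (take i w) (drop i w))"
    by (rule sum.Sigma) (simp_all add: assms(1))
  also have "\<dots> = (\<Sum>(u, v)\<in>{(u, v). u \<in> W \<and> v \<in> W \<and> u @ v \<in> W}. g u v)"
    by (rule sum.reindex_bij_witness[of _ "\<lambda>(u, v). (u @ v, length u)" "\<lambda>(w, i). (take i w, drop i w)"])
       (auto simp: assms(2))
  also have "\<dots> = (\<Sum>(u, v)\<in>W \<times> W. g u v)"
    by (rule sum.mono_neutral_left) (use assms in auto)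
  also have "\<dots> = (\<Sum>u\<in>W. \<Sum>v\<in>W. g u v)"
    by (simp add: sum.cartesian_product)
  finally show ?thesis .
qed

definition words_upto :: "(nat \<Rightarrow> 'a set) \<Rightarrow> nat \<Rightarrow> 'a list set" where
  "words_upto letters d = {w. set w \<subseteq> letters d \<and> length w \<le> d}"

(* Only words of length at most |k'| with letters in letters |k'| contribute to the (k, k') entry
   (word_op_nonzeroD below), so this finite sum is the formal sum over all words. *)
definition mould_op ::
  "('i::finite deg \<Rightarrow> 'i op) \<Rightarrow> (nat \<Rightarrow> 'i deg set) \<Rightarrow> 'i deg mould \<Rightarrow> 'i op" where
  "mould_op C letters M k k' = (\<Sum>w\<in>words_upto letters (mdeg k'). M w * word_op C w k k')"

definition mould_one :: "'a mould" where
  "mould_one w = (if w = [] then 1 else 0)"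

definition mould_mult :: "'a mould \<Rightarrow> 'a mould \<Rightarrow> 'a mould" where
  "mould_mult M M' w = (\<Sum>i\<le>length w. M (take i w) * M' (drop i w))"

primrec mould_pow :: "'a mould \<Rightarrow> nat \<Rightarrow> 'a mould" where
  "mould_pow M 0 = mould_one"
| "mould_pow M (Suc r) = mould_mult M (mould_pow M r)"

definition mould_pser :: "complex fps \<Rightarrow> 'a mould \<Rightarrow> 'a mould" where
  "mould_pser a M w = (\<Sum>r\<le>length w. a $ r * mould_pow M r w)"

lemma mould_mult_Nil [simp]: "mould_mult M M' [] = M [] * M' []"
  by (simp add: mould_mult_def)

lemma mould_pser_Nil [simp]: "mould_pser a M [] = a $ 0"
  by (simp add: mould_pser_def mould_one_def)

lemma mould_pow_eq_0:
  assumes "M [] = 0" "length w < r"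
  shows "mould_pow M r w = 0"
  using assms(2)
proof (induction r arbitrary: w)
  case (Suc r)
  have "M (take i w) * mould_pow M r (drop i w) = 0" if "i \<le> length w" for i
    using Suc that assms(1) by (cases "i = 0") auto
  then show ?case
    by (auto simp: mould_mult_def simp del: mult_eq_0_iff intro!: sum.neutral)
qed simp

locale graded_alphabet =
  fixes C :: "'i::finite deg \<Rightarrow> 'i op" and letters :: "nat \<Rightarrow> 'i deg set"
  assumes finite_letters: "finite (letters d)"
    and letters_mono: "d \<le> d' \<Longrightarrow> letters d \<subseteq> letters d'"
    and C_nonzeroD: "C a k k' \<noteq> 0 \<Longrightarrow> mdeg k < mdeg k' \<and> a \<in> letters (mdeg k')"
begin

abbreviation ev :: "'i deg mould \<Rightarrow> 'i op" where
  "ev \<equiv> mould_op C letters"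

lemma finite_words_upto: "finite (words_upto letters d)"
  unfolding words_upto_def by (rule finite_lists_length_le[OF finite_letters])

lemma words_upto_mono: "d \<le> d' \<Longrightarrow> words_upto letters d \<subseteq> words_upto letters d'"
  using letters_mono unfolding words_upto_def by fastforce

lemma op_upper_C: "op_upper (C a)"
  unfolding op_upper_def using C_nonzeroD less_imp_le by blast

lemma op_upper_word_op: "op_upper (word_op C w)"
  by (induction w) (simp_all add: op_upper_comp op_upper_C op_upper_id)

lemma word_op_nonzeroD:
  "word_op C w k k' \<noteq> 0 \<Longrightarrow> mdeg k + length w \<le> mdeg k' \<and> set w \<subseteq> letters (mdeg k')"
proof (induction w arbitrary: k')
  case (Cons a w)
  then obtain k'' where "word_op C w k k'' \<noteq> 0" "C a k'' k' \<noteq> 0"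
    by (auto elim: op_comp_nonzeroD)
  with Cons.IH[of k''] C_nonzeroD[of a k'' k'] letters_mono[of "mdeg k''" "mdeg k'"]
  show ?case by auto
qed (simp add: op_id_def split: if_splits)

lemma word_op_nonzero_imp_words_upto: "word_op C w k k' \<noteq> 0 \<Longrightarrow> w \<in> words_upto letters (mdeg k')"
  using word_op_nonzeroD unfolding words_upto_def by fastforce

lemma mould_op_eq_sum:
  assumes "finite S" "words_upto letters (mdeg k') \<subseteq> S"
  shows "ev M k k' = (\<Sum>w\<in>S. M w * word_op C w k k')"
  unfolding mould_op_def
  by (rule sum.mono_neutral_left[OF assms]) (auto dest: word_op_nonzero_imp_words_upto)

lemma mould_op_nonzeroD:
  assumes "ev M k k' \<noteq> 0"
  obtains w where "M w \<noteq> 0" "word_op C w k k' \<noteq> 0"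
  using assms unfolding mould_op_def by (metis (no_types, lifting) mult_eq_0_iff sum.neutral)

lemma op_upper_mould_op: "op_upper (ev M)"
  unfolding op_upper_def by (metis mould_op_nonzeroD word_op_nonzeroD le_add1 le_trans)

lemma op_strict_upper_mould_op:
  assumes "M [] = 0"
  shows "op_strict_upper (ev M)"
  unfolding op_strict_upper_def
proof (intro allI impI)
  fix k k' assume "ev M k k' \<noteq> 0"
  then obtain w where "M w \<noteq> 0" "word_op C w k k' \<noteq> 0"
    by (rule mould_op_nonzeroD)
  with assms word_op_nonzeroD[of w k k'] show "mdeg k < mdeg k'"
    by (cases w) auto
qed

lemma word_op_append: "word_op C (u @ v) = op_comp (word_op C u) (word_op C v)"
  by (induction u) (simp_all add: op_comp_id_left op_comp_assoc op_upper_word_op op_upper_C)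

lemma mould_op_one: "ev mould_one = op_id"
proof (intro ext)
  fix k k'
  have "ev mould_one k k' = (\<Sum>w\<in>{[]}. mould_one w * word_op C w k k')"
    unfolding mould_op_def
    by (rule sum.mono_neutral_right[OF finite_words_upto]) (auto simp: mould_one_def words_upto_def)
  then show "ev mould_one k k' = op_id k k'"
    by (simp add: mould_one_def)
qed

lemma mould_op_add: "ev (\<lambda>w. M w + M' w) = (\<lambda>k k'. ev M k k' + ev M' k k')"
  unfolding mould_op_def by (simp add: distrib_right sum.distrib)

lemma mould_op_diff: "ev (\<lambda>w. M w - M' w) = (\<lambda>k k'. ev M k k' - ev M' k k')"
  unfolding mould_op_def by (simp add: left_diff_distrib sum_subtractf)

lemma mould_op_uminus: "ev (\<lambda>w. - M w) = (\<lambda>k k'. - ev M k k')"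
  unfolding mould_op_def by (simp add: sum_negf)

lemma mould_op_zero: "ev (\<lambda>w. 0) = op_zero"
  unfolding mould_op_def op_zero_def by simp

lemma mould_op_mult: "ev (mould_mult M M') = op_comp (ev M) (ev M')"
proof (intro ext)
  fix k k' :: "'i mon"
  let ?W = "words_upto letters (mdeg k')" and ?U = "mons_upto (mdeg k')"
  have "ev (mould_mult M M') k k'
      = (\<Sum>w\<in>?W. \<Sum>i\<le>length w. M (take i w) * M' (drop i w) * word_op C (take i w @ drop i w) k k')"
    by (simp add: mould_op_def mould_mult_def sum_distrib_right)
  also have "\<dots> = (\<Sum>u\<in>?W. \<Sum>v\<in>?W. M u * M' v * word_op C (u @ v) k k')"
    by (rule sum_word_splits[OF finite_words_upto])
       (auto simp: finite_words_upto words_upto_def dest: in_set_takeD in_set_dropD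
         word_op_nonzero_imp_words_upto)
  also have "\<dots> = (\<Sum>u\<in>?W. \<Sum>v\<in>?W. \<Sum>b\<in>?U. (M u * word_op C u b k') * (M' v * word_op C v k b))"
    by (simp add: word_op_append op_comp_eq_sum[OF op_upper_word_op] sum_distrib_left mult_ac)
  also have "\<dots> = (\<Sum>b\<in>?U. (\<Sum>u\<in>?W. M u * word_op C u b k') * (\<Sum>v\<in>?W. M' v * word_op C v k b))"
    by (simp only: sum_product sum.swap[of _ ?W ?U])
  also have "\<dots> = (\<Sum>b\<in>?U. ev M b k' * ev M' k b)"
  proof (rule sum.cong[OF refl])
    fix b :: "'i mon" assume "b \<in> ?U"
    then have "ev M' k b = (\<Sum>v\<in>?W. M' v * word_op C v k b)"
      by (intro mould_op_eq_sum finite_words_upto words_upto_mono) (simp add: mons_upto_def)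
    then show "(\<Sum>u\<in>?W. M u * word_op C u b k') * (\<Sum>v\<in>?W. M' v * word_op C v k b)
        = ev M b k' * ev M' k b"
      by (simp add: mould_op_def)
  qed
  also have "\<dots> = op_comp (ev M) (ev M') k k'"
    by (simp add: op_comp_eq_sum[OF op_upper_mould_op] mult.commute)
  finally show "ev (mould_mult M M') k k' = op_comp (ev M) (ev M') k k'" .
qed

lemma mould_op_pow: "op_pow (ev M) r = ev (mould_pow M r)"
  by (induction r) (simp_all add: mould_op_one mould_op_mult)

lemma mould_op_pser_has_sum:
  assumes "M [] = 0"
  shows "((\<lambda>r. a $ r * op_pow (ev M) r k k') has_sum ev (mould_pser a M) k k') UNIV"
proof (rule has_sum_finite_neutralI)
  let ?W = "words_upto letters (mdeg k')"
  have vanish: "mould_pow M r w = 0" if "w \<in> ?W" "mdeg k' < r" for w r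
    using mould_pow_eq_0[where M = M, OF assms] that by (force simp: words_upto_def)
  show "a $ r * op_pow (ev M) r k k' = 0" if "r \<in> UNIV - {..mdeg k'}" for r
    using that vanish by (simp add: mould_op_pow mould_op_def)
  have "ev (mould_pser a M) k k' = (\<Sum>w\<in>?W. \<Sum>r\<le>mdeg k'. a $ r * mould_pow M r w * word_op C w k k')"
    unfolding mould_op_def mould_pser_def sum_distrib_right
  proof (rule sum.cong[OF refl])
    fix w assume "w \<in> ?W"
    then show "(\<Sum>r\<le>length w. a $ r * mould_pow M r w * word_op C w k k')
        = (\<Sum>r\<le>mdeg k'. a $ r * mould_pow M r w * word_op C w k k')"
      by (intro sum.mono_neutral_left) (auto simp: words_upto_def mould_pow_eq_0[where M = M, OF assms])
  qed
  then show "ev (mould_pser a M) k k' = (\<Sum>r\<le>mdeg k'. a $ r * op_pow (ev M) r k k')"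
    by (simp add: mould_op_pow mould_op_def sum.swap[of _ ?W "{..mdeg k'}"] sum_distrib_left mult_ac)
qed auto

lemma mould_op_log1p:
  assumes "M [] = 0"
  shows "op_log1p (ev M) = ev (mould_pser (fps_ln 1) M)"
proof (intro ext)
  fix k k'
  have "((\<lambda>r. (-1) ^ (r + 1) / of_nat r * op_pow (ev M) r k k')
      has_sum ev (mould_pser (fps_ln 1) M) k k') {1..}"
    using mould_op_pser_has_sum[where M = M, OF assms, of "fps_ln 1" k k']
    by (subst (asm) has_sum_cong_neutral[where T = "{1..}"]) (auto simp: fps_ln_nth dest!: Suc_le_D)
  then show "op_log1p (ev M) k k' = ev (mould_pser (fps_ln 1) M) k k'"
    unfolding op_log1p_def by (rule infsumI)
qed

lemma mould_op_exp:
  assumes "M [] = 0"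
  shows "op_exp (ev M) = ev (mould_pser (fps_exp 1) M)"
  using mould_op_pser_has_sum[where M = M, OF assms, of "fps_exp 1"]
  by (intro ext) (simp add: op_exp_def infsumI)

end

section \<open>Moulds depending only on the length of the word\<close>

definition length_mould :: "complex fps \<Rightarrow> 'a mould" where
  "length_mould a w = a $ length w"

lemma length_mould_Nil [simp]: "length_mould a [] = a $ 0"
  by (simp add: length_mould_def)

lemma mould_one_eq_length_mould: "mould_one = length_mould 1"
  by (intro ext) (simp add: mould_one_def length_mould_def)

lemma length_mould_add: "(\<lambda>w. length_mould a w + length_mould b w) = length_mould (a + b)"
  by (simp add: length_mould_def fun_eq_iff)

lemma length_mould_mult: "mould_mult (length_mould a) (length_mould b) = length_mould (a * b)"
  by (intro ext) (simp add: mould_mult_def length_mould_def fps_mult_nth atLeast0AtMost)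

lemma length_mould_pow: "mould_pow (length_mould a) r = length_mould (a ^ r)"
  by (induction r) (simp_all add: mould_one_eq_length_mould length_mould_mult)

lemma length_mould_pser: "mould_pser c (length_mould a) = length_mould (c oo a)"
  by (intro ext) (simp add: mould_pser_def length_mould_pow length_mould_def fps_compose_nth atLeast0AtMost)

lemma fps_exp_compose_ln: "fps_exp (1::complex) oo fps_ln 1 = 1 + fps_X"
proof -
  have "(fps_exp 1 - 1) oo fps_ln (1::complex) = fps_X"
    by (simp add: fps_ln_fps_exp_inv fps_inv_right)
  then show ?thesis
    using fps_compose_add_distrib[of "fps_exp 1 - 1" 1 "fps_ln (1::complex)"] by (simp add: add.commute)
qed

section \<open>Homogeneous components of a strictly upper operator\<close>

definition hom_letters :: "nat \<Rightarrow> 'i::finite deg set" where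
  "hom_letters d = (\<lambda>(k, k'). zmon k' - zmon k) ` (mons_upto d \<times> mons_upto d)"

lemma is_step_iff: "is_step k n k' \<longleftrightarrow> n = zmon k' - zmon k"
  by (auto simp: is_step_def zmon_def fun_eq_iff)

lemma hom_comp_apply: "hom_comp Y n k k' = (if n = zmon k' - zmon k then Y k k' else 0)"
  by (simp add: hom_comp_def is_step_iff)

lemma ldot_diff: "ldot lam (m - n) = ldot lam m - ldot lam n"
  by (simp add: ldot_def sum_subtractf algebra_simps)

lemma ldot_zero [simp]: "ldot lam 0 = 0"
  by (simp add: ldot_def)

locale strictly_upper_op =
  fixes X :: "'i::finite op"
  assumes strict_upper: "op_strict_upper X"

sublocale strictly_upper_op \<subseteq> graded_alphabet "hom_comp X" hom_letters
proof
  show "finite (hom_letters d :: 'i deg set)" for d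
    by (simp add: hom_letters_def finite_mons_upto)
  show "hom_letters d \<subseteq> (hom_letters d' :: 'i deg set)" if "d \<le> d'" for d d'
    using that unfolding hom_letters_def mons_upto_def by force
  show "mdeg k < mdeg k' \<and> n \<in> hom_letters (mdeg k')" if "hom_comp X n k k' \<noteq> 0" for n k k'
  proof
    from that have "X k k' \<noteq> 0" "n = zmon k' - zmon k"
      by (simp_all add: hom_comp_apply split: if_splits)
    then show "mdeg k < mdeg k'" "n \<in> hom_letters (mdeg k')"
      using strict_upper unfolding op_strict_upper_def hom_letters_def mons_upto_def by force+
  qed
qed

context strictly_upper_op
begin

lemma word_op_nonzero_sum_list: "word_op (hom_comp X) w k k' \<noteq> 0 \<Longrightarrow> sum_list w = zmon k' - zmon k"
proof (induction w arbitrary: k')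
  case (Cons n w)
  then obtain k'' where "word_op (hom_comp X) w k k'' \<noteq> 0" "hom_comp X n k'' k' \<noteq> 0"
    by (auto elim: op_comp_nonzeroD)
  then have "sum_list w = zmon k'' - zmon k" "n = zmon k' - zmon k''"
    by (metis Cons.IH, metis hom_comp_apply)
  then show ?case by (simp add: fun_eq_iff)
qed (simp add: op_id_def split: if_splits)

lemma mould_op_sum_list_factor: "ev (\<lambda>w. g (sum_list w) * M w) k k' = g (zmon k' - zmon k) * ev M k k'"
  unfolding mould_op_def sum_distrib_left
  by (rule sum.cong[OF refl]) (metis mult.assoc mult_zero_right word_op_nonzero_sum_list)

lemma mould_op_length_mould_X: "ev (length_mould fps_X) = X"
proof (intro ext)
  fix k k' :: "'i mon"
  define S where "S = insert [zmon k' - zmon k] (words_upto hom_letters (mdeg k'))"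
  have "ev (length_mould fps_X) k k' = (\<Sum>w\<in>S. length_mould fps_X w * word_op (hom_comp X) w k k')"
    by (rule mould_op_eq_sum) (auto simp: S_def finite_words_upto)
  also have "\<dots> = (\<Sum>w\<in>{[zmon k' - zmon k]}. length_mould fps_X w * word_op (hom_comp X) w k k')"
  proof (rule sum.mono_neutral_right)
    show "\<forall>w\<in>S - {[zmon k' - zmon k]}. length_mould fps_X w * word_op (hom_comp X) w k k' = 0"
    proof
      fix w assume "w \<in> S - {[zmon k' - zmon k]}"
      then show "length_mould fps_X w * word_op (hom_comp X) w k k' = 0"
        by (cases "length w = 1")
          (auto simp: length_mould_def op_comp_id_right hom_comp_apply length_Suc_conv split: if_splits)
    qed
  qed (auto simp: S_def finite_words_upto)
  also have "\<dots> = X k k'"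
    by (simp add: length_mould_def op_comp_id_right hom_comp_apply)
  finally show "ev (length_mould fps_X) k k' = X k k'" .
qed

lemma op_log1p_eq_mould_op: "op_log1p X = ev (length_mould (fps_ln 1))"
  using mould_op_log1p[of "length_mould fps_X"] by (simp add: mould_op_length_mould_X length_mould_pser)

lemma op_strict_upper_log1p: "op_strict_upper (op_log1p X)"
  by (simp add: op_log1p_eq_mould_op op_strict_upper_mould_op)

lemma op_exp_log1p: "op_exp (op_log1p X) = (\<lambda>k k'. op_id k k' + X k k')"
proof -
  have "op_exp (op_log1p X) = ev (length_mould (fps_exp 1 oo fps_ln 1))"
    by (simp add: op_log1p_eq_mould_op mould_op_exp length_mould_pser)
  also have "\<dots> = ev (\<lambda>w. length_mould 1 w + length_mould fps_X w)"
    by (simp add: fps_exp_compose_ln length_mould_add)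
  finally show ?thesis
    by (simp add: mould_op_add flip: mould_one_eq_length_mould add: mould_op_one mould_op_length_mould_X)
qed

end

section \<open>Poincare steps preserve the mould form\<close>

context strictly_upper_op
begin

lemma mould_op_comp_Flin:
  "op_comp (ev A) (Flin lam) = op_comp (Flin lam) (ev (\<lambda>w. exp (- ldot lam (sum_list w)) * A w))"
proof (intro ext)
  fix k k'
  have exps: "exp (- ldot lam (zmon k' - zmon k)) * exp (ldot lam (zmon k')) = exp (ldot lam (zmon k))"
    unfolding ldot_diff by (simp flip: exp_add)
  have "op_comp (Flin lam) (ev (\<lambda>w. exp (- ldot lam (sum_list w)) * A w)) k k'
      = (exp (- ldot lam (zmon k' - zmon k)) * exp (ldot lam (zmon k'))) * ev A k k'"
    unfolding Flin_comp_apply mould_op_sum_list_factor[of "\<lambda>m. exp (- ldot lam m)"]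
    by (simp only: mult_ac)
  also have "\<dots> = op_comp (ev A) (Flin lam) k k'"
    by (simp only: exps comp_Flin_apply)
  finally show "op_comp (ev A) (Flin lam) k k'
      = op_comp (Flin lam) (ev (\<lambda>w. exp (- ldot lam (sum_list w)) * A w)) k k'" ..
qed

lemma Sgen_mould_op:
  assumes "Dcomp lam T = hom_comp (ev P)" "P [] = 0"
  obtains S where "S [] = 0" "Sgen lam T = ev S"
proof (cases "\<exists>k\<ge>1. Nset lam T k \<noteq> {}")
  case True
  define NS where "NS = Nset lam T (LEAST k. 1 \<le> k \<and> Nset lam T k \<noteq> {})"
  define g where "g m = (if m \<in> NS then 1 / (1 - exp (ldot lam m)) else 0)" for m
  have "Sgen lam T k k' = ev (\<lambda>w. g (sum_list w) * P w) k k'" for k k'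
  proof -
    define n0 where "n0 = zmon k' - zmon k"
    have hom: "hom_comp (ev P) m k k' = (if m = n0 then ev P k k' else 0)" for m
      by (simp only: hom_comp_apply[of "ev P"] n0_def)
    have "Sgen lam T k k' = (\<Sum>\<^sub>\<infinity>m\<in>NS. hom_comp (ev P) m k k' / (1 - exp (ldot lam m)))"
      using True by (simp add: Sgen_def NS_def assms(1))
    also have "\<dots> = (\<Sum>m\<in>NS \<inter> {n0}. hom_comp (ev P) m k k' / (1 - exp (ldot lam m)))"
      by (rule infsum_finite_support) (auto simp: hom)
    also have "\<dots> = g n0 * ev P k k'"
      by (cases "n0 \<in> NS") (simp_all add: g_def hom)
    also have "\<dots> = ev (\<lambda>w. g (sum_list w) * P w) k k'"
      by (simp only: mould_op_sum_list_factor[of g] n0_def)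
    finally show ?thesis .
  qed
  then show ?thesis
    by (intro that[of "\<lambda>w. g (sum_list w) * P w"]) (auto simp: assms(2))
next
  case False
  then have "Sgen lam T = ev (\<lambda>w. 0)"
    unfolding Sgen_def mould_op_zero by (rule if_not_P)
  then show ?thesis
    by (rule that[rotated]) simp
qed

definition Flin_mould_form :: "('i \<Rightarrow> complex) \<Rightarrow> 'i op \<Rightarrow> bool" where
  "Flin_mould_form lam T \<longleftrightarrow> (\<exists>M. M [] = 1 \<and> T = op_comp (Flin lam) (ev M))"

lemma Flin_mould_form_id_plus: "Flin_mould_form lam (op_comp (Flin lam) (\<lambda>k k'. op_id k k' + X k k'))"
  unfolding Flin_mould_form_def
proof (intro exI conjI)
  show "(\<lambda>w. mould_one w + length_mould fps_X w) [] = 1"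
    by (simp add: mould_one_def)
  show "op_comp (Flin lam) (\<lambda>k k'. op_id k k' + X k k')
      = op_comp (Flin lam) (ev (\<lambda>w. mould_one w + length_mould fps_X w))"
    by (simp add: mould_op_add mould_op_one mould_op_length_mould_X)
qed

lemma Flin_mould_form_exp: "Flin_mould_form lam (op_comp (Flin lam) (op_exp X))"
  unfolding Flin_mould_form_def
  using mould_op_exp[of "length_mould fps_X"]
  by (intro exI[of _ "length_mould (fps_exp 1)"])
     (simp add: mould_op_length_mould_X length_mould_pser)

lemma Flin_mould_form_poin_step:
  assumes "Flin_mould_form lam T"
  shows "Flin_mould_form lam
           (op_comp (op_exp (Sgen lam T)) (op_comp T (op_exp (\<lambda>k k'. - Sgen lam T k k'))))"
proof -
  obtain M where M_Nil: "M [] = 1" and T: "T = op_comp (Flin lam) (ev M)"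
    using assms by (auto simp: Flin_mould_form_def)
  define M0 where "M0 = (\<lambda>w. M w - mould_one w)"
  have "nilpart lam T = ev M0"
    by (simp add: T nilpart_Flin_comp M0_def mould_op_diff mould_op_one)
  moreover have "M0 [] = 0"
    by (simp add: M0_def M_Nil mould_one_def)
  moreover have "Dcomp lam T = hom_comp (op_log1p (nilpart lam T))"
    by (intro ext) (simp add: Dcomp_def)
  ultimately have "Dcomp lam T = hom_comp (ev (mould_pser (fps_ln 1) M0))"
    by (simp add: mould_op_log1p)
  then obtain S where S_Nil: "S [] = 0" and S: "Sgen lam T = ev S"
    by (rule Sgen_mould_op) simp
  define E where "E = mould_pser (fps_exp 1) S"
  define E' where "E' = mould_pser (fps_exp 1) (\<lambda>w. - S w)"
  have "op_exp (Sgen lam T) = ev E" "op_exp (\<lambda>k k'. - Sgen lam T k k') = ev E'"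
    by (simp_all add: S E_def E'_def mould_op_exp S_Nil flip: mould_op_uminus)
  moreover have "op_comp (ev E) (op_comp T (ev E'))
      = op_comp (Flin lam) (ev (mould_mult (\<lambda>w. exp (- ldot lam (sum_list w)) * E w) (mould_mult M E')))"
  proof -
    have "op_comp (ev E) (op_comp T (ev E')) = op_comp (op_comp (ev E) (Flin lam)) (ev (mould_mult M E'))"
      by (simp add: T mould_op_mult op_comp_assoc op_upper_Flin op_upper_mould_op)
    then show ?thesis
      by (simp add: mould_op_comp_Flin op_comp_assoc op_upper_Flin op_upper_mould_op mould_op_mult)
  qed
  moreover have "mould_mult (\<lambda>w. exp (- ldot lam (sum_list w)) * E w) (mould_mult M E') [] = 1"
    by (simp add: E_def E'_def M_Nil)
  ultimately show ?thesis
    unfolding Flin_mould_form_def by metis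
qed

lemma Flin_mould_form_poin_iter: "Flin_mould_form lam T \<Longrightarrow> Flin_mould_form lam (poin_iter lam T r)"
  by (induction r) (simp_all add: Flin_mould_form_poin_step)

lemma Flin_mould_form_expands:
  assumes "Flin_mould_form lam T"
  shows "\<exists>M. mould_expands lam T (hom_comp X) (add_closure {n. hom_comp X n \<noteq> op_zero}) M"
proof -
  obtain M where T: "T = op_comp (Flin lam) (ev M)"
    using assms by (auto simp: Flin_mould_form_def)
  let ?A = "add_closure {n. hom_comp X n \<noteq> op_zero}"
  have "((\<lambda>w. exp (ldot lam (zmon k')) * (M w * word_op (hom_comp X) w k k')) has_sum T k k') (lists ?A)"
    for k k'
  proof -
    let ?W = "words_upto hom_letters (mdeg k')"
    have "word_op (hom_comp X) w k k' = 0" if "w \<notin> ?W" for w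
      using that word_op_nonzero_imp_words_upto by blast
    moreover have "word_op (hom_comp X) w k k' = 0" if "w \<notin> lists ?A" for w
    proof (rule ccontr)
      assume "word_op (hom_comp X) w k k' \<noteq> 0"
      then have "set w \<subseteq> ?A"
        using word_op_nonzero_letters by (blast intro: add_closure.base)
      with that show False by auto
    qed
    ultimately have "((\<lambda>w. exp (ldot lam (zmon k')) * (M w * word_op (hom_comp X) w k k')) has_sum T k k') (lists ?A)
        \<longleftrightarrow> ((\<lambda>w. exp (ldot lam (zmon k')) * (M w * word_op (hom_comp X) w k k')) has_sum T k k') ?W"
      by (intro has_sum_cong_neutral) auto
    moreover have "T k k' = (\<Sum>w\<in>?W. exp (ldot lam (zmon k')) * (M w * word_op (hom_comp X) w k k'))"
      by (simp add: T Flin_comp_apply mould_op_def sum_distrib_left mult.commute)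
    ultimately show ?thesis
      by (simp add: finite_words_upto)
  qed
  then show ?thesis
    unfolding mould_expands_def by blast
qed

end

theorem mainTheorem9:
  fixes lam :: "'i::finite \<Rightarrow> complex" and h :: "'i \<Rightarrow> 'i ser" and r :: nat
  assumes h_order2: "\<forall>j p. mdeg p \<le> 1 \<longrightarrow> h j p = 0"
    and h_analytic: "\<exists>C R. 0 < R \<and> (\<forall>j p. norm (h j p) \<le> C * R ^ mdeg p)"
  shows "\<exists>Poin poin.
    mould_expands lam (poin_iter lam (Fop lam h) r) (Dcomp lam (Fop lam h)) (calAset lam (Fop lam h)) Poin \<and>
    mould_expands lam (poin_iter lam (Fop lam h) r) (Bcomp lam (Fop lam h)) (Aset lam (Fop lam h)) poin"
proof -
  define F where "F = Fop lam h"
  define N where "N = nilpart lam F"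
  interpret B: strictly_upper_op N
    unfolding N_def F_def by standard (rule op_strict_upper_nilpart_Fop[OF h_order2])
  interpret D: strictly_upper_op "op_log1p N"
    by standard (rule B.op_strict_upper_log1p)
  have F_B: "F = op_comp (Flin lam) (\<lambda>k k'. op_id k k' + N k k')"
    by (simp add: N_def Flin_comp_nilpart)
  then have F_D: "F = op_comp (Flin lam) (op_exp (op_log1p N))"
    by (simp add: B.op_exp_log1p)
  have D_comp: "Dcomp lam F = hom_comp (op_log1p N)" and B_comp: "Bcomp lam F = hom_comp N"
    by (intro ext, simp add: Dcomp_def Bcomp_def N_def)+
  have "D.Flin_mould_form lam F"
    unfolding F_D by (rule D.Flin_mould_form_exp)
  then obtain Poin where "mould_expands lam (poin_iter lam F r) (Dcomp lam F) (calAset lam F) Poin"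
    unfolding calAset_def D_comp using D.Flin_mould_form_expands D.Flin_mould_form_poin_iter by blast
  moreover have "B.Flin_mould_form lam F"
    unfolding F_B by (rule B.Flin_mould_form_id_plus)
  then obtain poin where "mould_expands lam (poin_iter lam F r) (Bcomp lam F) (Aset lam F) poin"
    unfolding Aset_def B_comp using B.Flin_mould_form_expands B.Flin_mould_form_poin_iter by blast
  ultimately show ?thesis
    unfolding F_def by blast
qed

end
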